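(* For every $g\ge1$ and every integer $c$ with $0\le c\le\lfloor g/2\rfloor$, the quantity \[ L_{g,p^c}=\prod_{i=1}^{g-2c}(p^i+(-1)^i)\cdot\prod_{i=1}^c(p^{4i-2}-1)\cdot\frac{\prod_{i=1}^g(p^{2i}-1)}{\prod_{i=1}^{2c}(p^{2i}-1)\prod_{i=1}^{g-2c}(p^{2i}-1)} \] is a polynomial in $p$ with coefficients in $\mathbb{Z}$, of degree $(g^2+4gc-8c^2+g-2c)/2$. Moreover, as $c$ ranges over $0\le c\le\lfloor g/2\rfloor$, this degree is minimal exactly for $c=0$ when $g$ is odd and exactly for $c=g/2$ when $g$ is even.
   Context: Here $p$ is regarded as an indeterminate (or a prime). *)

theory Defs
  imports "HOL-Computational_Algebra.Polynomial"
begin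

definition numer :: "nat \<Rightarrow> nat \<Rightarrow> int poly" where
  "numer g c =
     (\<Prod>i=1..g-2*c. monom 1 i + [:(-1)^i:]) *
     (\<Prod>i=1..c. monom 1 (4*i-2) - 1) *
     (\<Prod>i=1..g. monom 1 (2*i) - 1)"

definition denom :: "nat \<Rightarrow> nat \<Rightarrow> int poly" where
  "denom g c = (\<Prod>i=1..2*c. monom 1 (2*i) - 1) * (\<Prod>i=1..g-2*c. monom 1 (2*i) - 1)"

text \<open>L g c is the quotient (meaningful as L_{g,p^c} once denom divides numer).\<close>
definition Lpoly :: "nat \<Rightarrow> nat \<Rightarrow> int poly" where
  "Lpoly g c = numer g c div denom g c"

end

theory Submission
  imports Defs
begin

text \<open>With \<open>F n = \<Prod>i=1..n. (p\<^sup>2)\<^sup>i - 1\<close>, the denominator is \<open>F (2c) F (g-2c)\<close> and the last factor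
  of the numerator is \<open>F g\<close>; the quotient is a Gaussian binomial coefficient in \<open>p\<^sup>2\<close>, hence an
  integer polynomial. Every factor is monic up to a constant term, so the degree of \<open>L\<^sub>g\<^sub>,\<^sub>c\<close> is
  read off from the exponents, giving twice the degree as \<open>g\<^sup>2 + g + 2c(2g - 4c - 1)\<close>. The term
  \<open>2c(2g - 4c - 1)\<close> is positive for \<open>0 < c \<le> (g-1)/2\<close>, and for \<open>g = 2h\<close> it exceeds its value \<open>-2h\<close> at
  \<open>c = h\<close> by \<open>(h - c)(8c + 2)\<close>.\<close>

definition qfactorial :: "'a::comm_ring_1 \<Rightarrow> nat \<Rightarrow> 'a" where
  "qfactorial q n = (\<Prod>i=1..n. q ^ i - 1)"

lemma qfactorial_0 [simp]: "qfactorial q 0 = 1"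
  by (simp add: qfactorial_def)

lemma qfactorial_Suc: "qfactorial q (Suc n) = qfactorial q n * (q ^ Suc n - 1)"
  by (simp add: qfactorial_def prod.nat_ivl_Suc')

text \<open>\<open>qfactorial q n\<close> is \<open>(q - 1)\<^sup>n [n]\<^sub>q!\<close>, so this is the integrality of Gaussian binomial
  coefficients; the induction rests on \<open>q\<^sup>a\<^sup>+\<^sup>b - 1 = q\<^sup>b (q\<^sup>a - 1) + (q\<^sup>b - 1)\<close>.\<close>
lemma qfactorial_mult_dvd_qfactorial_add:
  "qfactorial q a * qfactorial q b dvd qfactorial q (a + b)"
proof (induction "a + b" arbitrary: a b)
  case 0
  then show ?case by simp
next
  case (Suc n)
  show ?case
  proof (cases "a = 0 \<or> b = 0")
    case True
    then show ?thesis by auto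
  next
    case False
    then obtain a' b' where a: "a = Suc a'" and b: "b = Suc b'"
      by (meson not0_implies_Suc)
    have n: "n = a' + b" "n = a + b'"
      using Suc.hyps(2) a b by auto
    have split: "qfactorial q (a + b)
        = q ^ b * (qfactorial q n * (q ^ a - 1)) + qfactorial q n * (q ^ b - 1)"
      using Suc.hyps(2) qfactorial_Suc[of q n] by (simp add: algebra_simps power_add)
    have "qfactorial q a * qfactorial q b = qfactorial q a' * qfactorial q b * (q ^ a - 1)"
      by (simp add: a qfactorial_Suc mult_ac)
    then have "qfactorial q a * qfactorial q b dvd qfactorial q n * (q ^ a - 1)"
      using Suc.hyps(1)[OF n(1)] n(1) by (simp add: mult_dvd_mono)
    moreover have "qfactorial q a * qfactorial q b = qfactorial q a * qfactorial q b' * (q ^ b - 1)"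
      by (simp add: b qfactorial_Suc mult_ac)
    then have "qfactorial q a * qfactorial q b dvd qfactorial q n * (q ^ b - 1)"
      using Suc.hyps(1)[OF n(2)] n(2) by (simp add: mult_dvd_mono)
    ultimately show ?thesis
      unfolding split by (simp add: dvd_add dvd_mult)
  qed
qed

lemma qfactorial_monom: "qfactorial (monom 1 k) n = (\<Prod>i=1..n. monom 1 (k * i) - 1)"
  by (simp add: qfactorial_def monom_power)

lemma degree_monom_plus_const:
  "n \<ge> 1 \<Longrightarrow> degree (monom (1::'a::comm_ring_1) n + [:a:]) = n"
  by (subst degree_add_eq_left) (auto simp: degree_monom_eq)

lemma diff_one_poly_eq: "(p::'a::comm_ring_1 poly) - 1 = p + [:-1:]"
  by (simp add: one_pCons)

lemma monom_plus_const_nonzero: "n \<ge> 1 \<Longrightarrow> monom (1::'a::comm_ring_1) n + [:a:] \<noteq> 0"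
  using degree_monom_plus_const[of n a] by auto

lemma degree_prod_monom_plus_const:
  assumes "\<forall>i\<in>A. f i \<ge> 1"
  shows "degree (\<Prod>i\<in>A. monom (1::'a::idom) (f i) + [:a i:]) = (\<Sum>i\<in>A. f i)"
  using assms
  by (simp add: degree_prod_eq_sum_degree degree_monom_plus_const monom_plus_const_nonzero)

lemma degree_prod_monom_minus_one:
  assumes "\<forall>i\<in>A. f i \<ge> 1"
  shows "degree (\<Prod>i\<in>A. monom (1::'a::idom) (f i) - 1) = (\<Sum>i\<in>A. f i)"
  unfolding diff_one_poly_eq by (rule degree_prod_monom_plus_const[OF assms])

lemma prod_monom_plus_const_nonzero:
  assumes "\<forall>i\<in>A. f i \<ge> 1"
  shows "(\<Prod>i\<in>A. monom (1::'a::idom) (f i) + [:a i:]) \<noteq> 0"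
  using assms monom_plus_const_nonzero by (cases "finite A") auto

lemma prod_monom_minus_one_nonzero:
  assumes "\<forall>i\<in>A. f i \<ge> 1"
  shows "(\<Prod>i\<in>A. monom (1::'a::idom) (f i) - 1) \<noteq> 0"
  unfolding diff_one_poly_eq by (rule prod_monom_plus_const_nonzero[OF assms])

lemma degree_div_add_degree:
  fixes a b :: "'a::idom_divide poly"
  assumes "b dvd a" "a \<noteq> 0"
  shows "degree (a div b) + degree b = degree a"
proof -
  have a: "a = b * (a div b)"
    using assms(1) by simp
  with assms(2) have "b \<noteq> 0" "a div b \<noteq> 0"
    by auto
  then have "degree (b * (a div b)) = degree b + degree (a div b)"
    by (rule degree_mult_eq)
  then show ?thesis
    using a by simp
qed

lemma twice_degree_prod_monom_plus_const:
  "2 * degree (\<Prod>i=1..n. monom (1::'a::idom) i + [:a i:]) = n * (n + 1)"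
  using double_gauss_sum_from_Suc_0[of n, where 'a = nat]
  by (simp add: degree_prod_monom_plus_const)

lemma twice_degree_qfactorial_monom:
  "2 * degree (qfactorial (monom (1::'a::idom) k) n) = k * n * (n + 1)"
proof (cases "k = 0")
  case True
  then show ?thesis by (simp add: qfactorial_def power_0_left)
next
  case False
  then have degree: "degree (qfactorial (monom (1::'a) k) n) = k * (\<Sum>i=1..n. i)"
    by (simp add: qfactorial_monom degree_prod_monom_minus_one sum_distrib_left)
  have "2 * (\<Sum>i=1..n. i) = n * (n + 1)"
    using double_gauss_sum_from_Suc_0[of n, where 'a = nat] by simp
  then show ?thesis
    unfolding degree by (metis mult.assoc mult.left_commute)
qed

lemma degree_prod_monom_4i_minus_2:
  "degree (\<Prod>i=1..n. monom (1::'a::idom) (4 * i - 2) - 1) = 2 * n\<^sup>2"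
proof -
  have "(\<Sum>i=1..n. 4 * i - 2) = 2 * n\<^sup>2"
    by (induction n) (auto simp: power2_eq_square algebra_simps)
  moreover have "\<forall>i\<in>{1..n}. 4 * i - 2 \<ge> 1"
    by auto
  ultimately show ?thesis
    using degree_prod_monom_minus_one[of "{1..n}" "\<lambda>i. 4 * i - 2"] by simp
qed

lemma numer_eq_qfactorial:
  "numer g c = (\<Prod>i=1..g-2*c. monom 1 i + [:(-1)^i:]) * (\<Prod>i=1..c. monom 1 (4*i-2) - 1)
     * qfactorial (monom 1 2) g"
  by (simp add: numer_def qfactorial_monom)

lemma denom_eq_qfactorial:
  "denom g c = qfactorial (monom 1 2) (2*c) * qfactorial (monom 1 2) (g-2*c)"
  by (simp add: denom_def qfactorial_monom)

lemma denom_dvd_numer: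
  assumes "2 * c \<le> g"
  shows "denom g c dvd numer g c"
proof -
  have "denom g c dvd qfactorial (monom 1 2) g"
    using qfactorial_mult_dvd_qfactorial_add[of "monom 1 2" "2*c" "g-2*c"] assms
    by (simp add: denom_eq_qfactorial)
  then show ?thesis
    unfolding numer_eq_qfactorial by (rule dvd_mult)
qed

lemma numer_nonzero: "numer g c \<noteq> 0"
  unfolding numer_def
  by (intro no_zero_divisors prod_monom_plus_const_nonzero prod_monom_minus_one_nonzero) auto

definition twice_Ldegree :: "nat \<Rightarrow> nat \<Rightarrow> int" where
  "twice_Ldegree g c = int g ^ 2 + 4 * int g * int c - 8 * int c ^ 2 + int g - 2 * int c"

lemma twice_degree_Lpoly:
  assumes "2 * c \<le> g"
  shows "2 * int (degree (Lpoly g c)) = twice_Ldegree g c"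
proof -
  define m where "m = g - 2*c"
  define A where "A = (\<Prod>i=1..m. monom (1::int) i + [:(-1)^i:])"
  define B where "B = (\<Prod>i=1..c. monom (1::int) (4*i-2) - 1)"
  define Q where "Q = qfactorial (monom (1::int) 2)"
  have numer: "numer g c = A * B * Q g"
    by (simp add: numer_eq_qfactorial A_def B_def Q_def m_def)
  have denom: "denom g c = Q (2*c) * Q m"
    by (simp add: denom_eq_qfactorial Q_def m_def)
  have "A * B * Q g \<noteq> 0"
    using numer_nonzero numer by metis
  then have "degree (numer g c) = degree A + degree B + degree (Q g)"
    by (simp add: numer degree_mult_eq)
  moreover have "2 * degree A = m * (m + 1)"
    unfolding A_def by (rule twice_degree_prod_monom_plus_const)
  moreover have "degree B = 2 * c\<^sup>2"
    unfolding B_def by (rule degree_prod_monom_4i_minus_2)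
  moreover have "2 * degree (Q g) = 2 * g * (g + 1)"
    unfolding Q_def by (rule twice_degree_qfactorial_monom)
  ultimately have degree_numer: "2 * degree (numer g c) = m * (m + 1) + 4 * c\<^sup>2 + 2 * g * (g + 1)"
    by simp
  have "Q (2*c) * Q m \<noteq> 0"
    using denom_dvd_numer[OF assms] numer_nonzero denom by fastforce
  then have "degree (denom g c) = degree (Q (2*c)) + degree (Q m)"
    by (simp add: denom degree_mult_eq)
  moreover have "2 * degree (Q (2*c)) = 2 * (2 * c) * (2 * c + 1)" "2 * degree (Q m) = 2 * m * (m + 1)"
    unfolding Q_def by (rule twice_degree_qfactorial_monom)+
  ultimately have degree_denom: "2 * degree (denom g c) = 2 * (2 * c) * (2 * c + 1) + 2 * m * (m + 1)"
    by simp
  have "degree (Lpoly g c) + degree (denom g c) = degree (numer g c)"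
    unfolding Lpoly_def using denom_dvd_numer[OF assms] numer_nonzero
    by (rule degree_div_add_degree)
  then have "2 * int (degree (Lpoly g c))
      = int (m * (m + 1) + 4 * c\<^sup>2 + 2 * g * (g + 1)) - int (2 * (2 * c) * (2 * c + 1) + 2 * m * (m + 1))"
    using degree_numer degree_denom by linarith
  moreover have "int g = 2 * int c + int m"
    using assms by (simp add: m_def)
  ultimately show ?thesis
    unfolding twice_Ldegree_def by (simp add: algebra_simps power2_eq_square)
qed

lemma twice_Ldegree_strict_argmin:
  assumes "c \<le> g div 2" and "c \<noteq> (if odd g then 0 else g div 2)"
  shows "twice_Ldegree g (if odd g then 0 else g div 2) < twice_Ldegree g c"
proof (cases "odd g")
  case True
  then have "1 \<le> c" "4 * int c + 2 \<le> 2 * int g"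
    using assms by (auto elim!: oddE)
  then have "0 < (2 * int c) * (2 * int g - 4 * int c - 1)"
    by simp
  with True show ?thesis
    by (simp add: twice_Ldegree_def algebra_simps power2_eq_square)
next
  case False
  then obtain h where g: "g = 2 * h"
    by blast
  with False assms have "c < h"
    by simp
  then have "0 < (int h - int c) * (8 * int c + 2)"
    by simp
  with g show ?thesis
    by (simp add: twice_Ldegree_def algebra_simps power2_eq_square)
qed

theorem lemma3p2:
  fixes g :: nat
  assumes "g \<ge> 1"
  shows "(\<forall>c \<le> g div 2.
            denom g c dvd numer g c \<and>
            2 * int (degree (Lpoly g c)) =
              int g ^ 2 + 4 * int g * int c - 8 * int c ^ 2 + int g - 2 * int c)
       \<and> (\<forall>c \<le> g div 2. c \<noteq> (if odd g then 0 else g div 2) \<longrightarrow>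
            degree (Lpoly g (if odd g then 0 else g div 2)) < degree (Lpoly g c))"
proof (intro conjI allI impI)
  fix c
  assume "c \<le> g div 2"
  then have c: "2 * c \<le> g"
    by simp
  show "denom g c dvd numer g c"
    using denom_dvd_numer[OF c] .
  show "2 * int (degree (Lpoly g c)) =
      int g ^ 2 + 4 * int g * int c - 8 * int c ^ 2 + int g - 2 * int c"
    using twice_degree_Lpoly[OF c] by (simp add: twice_Ldegree_def)
next
  fix c
  define c\<^sub>0 where "c\<^sub>0 = (if odd g then 0 else g div 2)"
  assume "c \<le> g div 2" "c \<noteq> (if odd g then 0 else g div 2)"
  then have "twice_Ldegree g c\<^sub>0 < twice_Ldegree g c"
    unfolding c\<^sub>0_def by (rule twice_Ldegree_strict_argmin)
  moreover have "2 * c\<^sub>0 \<le> g" "2 * c \<le> g"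
    using \<open>c \<le> g div 2\<close> by (auto simp: c\<^sub>0_def)
  ultimately have "2 * int (degree (Lpoly g c\<^sub>0)) < 2 * int (degree (Lpoly g c))"
    by (simp add: twice_degree_Lpoly)
  then show "degree (Lpoly g (if odd g then 0 else g div 2)) < degree (Lpoly g c)"
    unfolding c\<^sub>0_def[symmetric] by simp
qed

end
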